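(* Let $\mathcal{D}$ be a $\{K_3,K_4\}$-decomposition of $K_{18}$ with $\alpha=13$, let $W$ be the set of vertices $x$ with $\alpha_x\ge 2$, and for $i\in\{0,1,2,3\}$ let $t_i$ be the number of copies of $K_3$ in $\mathcal{D}$ having exactly $i$ vertices in $W$. Then $(t_0,t_1,t_2,t_3)\neq(0,0,11,2)$.
   Context: A $\{K_3,K_4\}$-decomposition of $K_v$ is a collection of subgraphs, each isomorphic to $K_3$ or $K_4$, such that every edge of $K_v$ lies in exactly one of them. $\alpha$ is the number of copies of $K_3$ in the decomposition, and for a vertex $x$, $\alpha_x$ is the number of copies of $K_3$ in the decomposition containing $x$. *)

theory Defs
  imports Main
begin

text \<open>A copy of K3 or K4 inside the complete graph K_v on vertex set V is determined
by its vertex set (it uses all edges among those vertices), so a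
{K3,K4}-decomposition of K_v is a set D of 3- or 4-subsets of V such that every
pair of distinct vertices lies in exactly one member of D.\<close>

definition K34_decomposition :: "'a set \<Rightarrow> 'a set set \<Rightarrow> bool" where
  "K34_decomposition V D \<longleftrightarrow>
     (\<forall>B\<in>D. B \<subseteq> V \<and> (card B = 3 \<or> card B = 4)) \<and>
     (\<forall>x\<in>V. \<forall>y\<in>V. x \<noteq> y \<longrightarrow> (\<exists>!B. B \<in> D \<and> x \<in> B \<and> y \<in> B))"

definition alpha :: "'a set set \<Rightarrow> nat" where
  "alpha D = card {B\<in>D. card B = 3}"

definition alpha_at :: "'a set set \<Rightarrow> 'a \<Rightarrow> nat" where
  "alpha_at D x = card {B\<in>D. card B = 3 \<and> x \<in> B}"

definition Wset :: "'a set \<Rightarrow> 'a set set \<Rightarrow> 'a set" where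
  "Wset V D = {x\<in>V. alpha_at D x \<ge> 2}"

definition tcount :: "'a set \<Rightarrow> 'a set set \<Rightarrow> nat \<Rightarrow> nat" where
  "tcount V D i = card {B\<in>D. card B = 3 \<and> card (B \<inter> Wset V D) = i}"

end

theory Submission
  imports Defs
begin

text \<open>Write \<open>N = V - W\<close> and call \<open>|K \<inter> W|\<close> the weight of a quad (copy of \<open>K4\<close>) \<open>K\<close>.
  Every vertex satisfies \<open>2 t + 3 q = 17\<close> for its numbers of triangles and quads, and the
  triangle profile then forces \<open>|W| = 7\<close> with \<open>(t, q) = (4, 3)\<close> on \<open>W\<close>, and \<open>|N| = 11\<close> with
  \<open>(t, q) = (1, 5)\<close> on \<open>N\<close>. Counting pairs inside \<open>W\<close>, and the fact that the five quads at an
  \<open>N\<close>-vertex have total weight five, leave two possibilities for the numbers \<open>k\<^sub>j\<close> of quads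
  of weight \<open>j\<close>: \<open>k\<^sub>0 = k\<^sub>2 = k\<^sub>3 = 1\<close>, where both \<open>N\<close>-vertices of the quad of weight two
  would need the single quad of weight zero; or \<open>(k\<^sub>0, k\<^sub>2, k\<^sub>3) = (2, 4, 0)\<close>. In the second
  case the quads \<open>Z1, Z2\<close> of weight zero are disjoint, every vertex of \<open>Z1 \<union> Z2\<close> lies in exactly
  one (heavy) quad of weight two, which meets each of \<open>Z1, Z2\<close> once, and the remaining three
  vertices \<open>R\<close> of \<open>N\<close> lie only in quads of weight one. Counting the vertices of \<open>Z1\<close> seen from
  each vertex of \<open>R\<close> gives a parity contradiction unless some quad contains \<open>R\<close>; but then the
  other two quads at its \<open>W\<close>-vertex are heavy, and following the heavy partners of the rest of
  \<open>Z1\<close> from their second \<open>W\<close>-vertices forces two heavy quads to coincide.\<close>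

lemma sum_comp_eq_sum_card_fibres:
  fixes f :: "'b \<Rightarrow> 'c::comm_semiring_1"
  assumes "finite A" "finite I" "g ` A \<subseteq> I"
  shows "(\<Sum>a\<in>A. f (g a)) = (\<Sum>i\<in>I. of_nat (card {a\<in>A. g a = i}) * f i)"
proof -
  have "(\<Sum>a\<in>A. f (g a)) = (\<Sum>i\<in>I. \<Sum>a\<in>{a\<in>A. g a = i}. f (g a))"
    using sum.group[OF assms, of "\<lambda>a. f (g a)"] by simp
  also have "\<dots> = (\<Sum>i\<in>I. of_nat (card {a\<in>A. g a = i}) * f i)"
    by (intro sum.cong) auto
  finally show ?thesis .
qed

lemma Diff_singleton_Int_eq: "x \<notin> S \<Longrightarrow> (B - {x}) \<inter> S = B \<inter> S"
  by blast

lemma sum_remove_two: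
  assumes "finite A" "x \<in> A" "y \<in> A" "x \<noteq> y"
  shows "sum f A = f x + f y + sum f (A - {x, y})"
proof -
  have "sum f A = f x + sum f (A - {x})" using sum.remove[OF assms(1,2)] .
  moreover have "sum f (A - {x}) = f y + sum f (A - {x} - {y})"
    using assms by (intro sum.remove) auto
  moreover have "A - {x} - {y} = A - {x, y}" by blast
  ultimately show ?thesis by (simp add: add.assoc)
qed

lemma card_ge_2_obtain_other:
  assumes "finite A" "card A \<ge> 2"
  obtains v where "v \<in> A" "v \<noteq> u"
proof -
  have "\<not> A \<subseteq> {u}"
    using card_mono[of "{u}" A] assms by auto
  with that show ?thesis by blast
qed

locale K34_decomposition_of =
  fixes V :: "'a set" and D :: "'a set set"
  assumes finite_vertices: "finite V" and decomposition: "K34_decomposition V D"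
begin

definition blocks_at :: "'a \<Rightarrow> 'a set set" where
  "blocks_at x = {B\<in>D. x \<in> B}"

definition triangles :: "'a set set" where
  "triangles = {B\<in>D. card B = 3}"

definition quads :: "'a set set" where
  "quads = {B\<in>D. card B = 4}"

definition triangles_at :: "'a \<Rightarrow> 'a set set" where
  "triangles_at x = {B\<in>triangles. x \<in> B}"

definition quads_at :: "'a \<Rightarrow> 'a set set" where
  "quads_at x = {B\<in>quads. x \<in> B}"

lemma block_subset: "B \<in> D \<Longrightarrow> B \<subseteq> V"
  and card_block: "B \<in> D \<Longrightarrow> card B = 3 \<or> card B = 4"
  using decomposition unfolding K34_decomposition_def by blast+

lemma block_exists: "x \<in> V \<Longrightarrow> y \<in> V \<Longrightarrow> x \<noteq> y \<Longrightarrow> \<exists>B\<in>D. x \<in> B \<and> y \<in> B"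
  using decomposition unfolding K34_decomposition_def by blast

lemma block_unique:
  assumes "B \<in> D" "B' \<in> D" "x \<in> B" "y \<in> B" "x \<in> B'" "y \<in> B'" "x \<noteq> y"
  shows "B = B'"
proof -
  have "x \<in> V" "y \<in> V" using assms block_subset by auto
  then have "\<exists>!B. B \<in> D \<and> x \<in> B \<and> y \<in> B"
    using decomposition \<open>x \<noteq> y\<close> unfolding K34_decomposition_def by blast
  with assms show ?thesis by blast
qed

lemma finite_blocks: "finite D"
  using block_subset finite_vertices by (meson Pow_iff finite_Pow_iff finite_subset subsetI)

lemma finite_block: "B \<in> D \<Longrightarrow> finite B"
  using block_subset finite_vertices finite_subset by blast

lemma card_block_Int_le_1:
  assumes "B \<in> D" "B' \<in> D" "B \<noteq> B'"
  shows "card (B \<inter> B') \<le> 1"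
proof -
  have "finite (B \<inter> B')" using assms finite_block by blast
  then show ?thesis
    using block_unique[OF assms(1,2)] assms(3) by (auto simp: card_le_Suc0_iff_eq)
qed

lemma triangles_subset: "triangles \<subseteq> D" and quads_subset: "quads \<subseteq> D"
  unfolding triangles_def quads_def by auto

lemma finite_triangles: "finite triangles" and finite_quads: "finite quads"
  using finite_blocks triangles_subset quads_subset finite_subset by blast+

lemma finite_blocks_at: "finite (blocks_at x)"
  and finite_triangles_at: "finite (triangles_at x)" and finite_quads_at: "finite (quads_at x)"
  using finite_blocks finite_triangles finite_quads
  unfolding blocks_at_def triangles_at_def quads_at_def by auto

lemma card_triangle: "B \<in> triangles \<Longrightarrow> card B = 3"
  and card_quad: "B \<in> quads \<Longrightarrow> card B = 4"
  unfolding triangles_def quads_def by auto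

lemma triangle_or_quad: "B \<in> D \<Longrightarrow> B \<in> triangles \<or> B \<in> quads"
  using card_block unfolding triangles_def quads_def by auto

lemma triangles_Int_quads: "triangles \<inter> quads = {}"
  unfolding triangles_def quads_def by auto

lemma blocks_eq_triangles_Un_quads: "D = triangles \<union> quads"
  using triangle_or_quad triangles_subset quads_subset by blast

lemma triangle_through_if_no_quad:
  assumes "x \<in> V" "y \<in> V" "x \<noteq> y" "\<forall>K\<in>quads_at x. y \<notin> K"
  shows "\<exists>B\<in>triangles. x \<in> B \<and> y \<in> B"
proof -
  obtain B where B: "B \<in> D" "x \<in> B" "y \<in> B" using block_exists[OF assms(1-3)] by blast
  then have "B \<notin> quads" using assms(4) unfolding quads_at_def by blast
  with B triangle_or_quad show ?thesis by blast
qed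

lemma sum_blocks_split: "(\<Sum>B\<in>D. g B) = (\<Sum>B\<in>triangles. g B) + (\<Sum>B\<in>quads. g B)"
  by (subst blocks_eq_triangles_Un_quads)
    (rule sum.union_disjoint[OF finite_triangles finite_quads triangles_Int_quads])

lemma alpha_eq_card_triangles: "alpha D = card triangles"
  unfolding alpha_def triangles_def ..

lemma alpha_at_eq_card_triangles_at: "alpha_at D x = card (triangles_at x)"
  unfolding alpha_at_def triangles_at_def triangles_def by (simp add: conj_assoc)

lemma sum_blocks_at_split:
  "(\<Sum>B\<in>blocks_at x. g B) = (\<Sum>B\<in>triangles_at x. g B) + (\<Sum>B\<in>quads_at x. g B)"
proof -
  have "blocks_at x = triangles_at x \<union> quads_at x"
    using triangle_or_quad triangles_subset quads_subset
    unfolding blocks_at_def triangles_at_def quads_at_def by auto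
  moreover have "triangles_at x \<inter> quads_at x = {}"
    using triangles_Int_quads unfolding triangles_at_def quads_at_def by auto
  ultimately show ?thesis
    using finite_triangles_at finite_quads_at by (simp add: sum.union_disjoint)
qed

lemma card_Diff_eq_sum_blocks_at:
  assumes x: "x \<in> V" and S: "S \<subseteq> V"
  shows "card (S - {x}) = (\<Sum>B\<in>blocks_at x. card ((B - {x}) \<inter> S))"
proof -
  have "S - {x} = (\<Union>B\<in>blocks_at x. (B - {x}) \<inter> S)"
  proof
    show "S - {x} \<subseteq> (\<Union>B\<in>blocks_at x. (B - {x}) \<inter> S)"
    proof
      fix y assume y: "y \<in> S - {x}"
      then obtain B where "B \<in> D" "x \<in> B" "y \<in> B" using block_exists[of x y] x S by auto
      with y show "y \<in> (\<Union>B\<in>blocks_at x. (B - {x}) \<inter> S)" unfolding blocks_at_def by auto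
    qed
  qed (auto simp: blocks_at_def)
  also have "card \<dots> = (\<Sum>B\<in>blocks_at x. card ((B - {x}) \<inter> S))"
  proof (rule card_UN_disjoint)
    show "\<forall>B\<in>blocks_at x. \<forall>B'\<in>blocks_at x. B \<noteq> B' \<longrightarrow> (B - {x}) \<inter> S \<inter> ((B' - {x}) \<inter> S) = {}"
      using block_unique[of _ _ x] unfolding blocks_at_def by blast
  qed (use finite_blocks_at finite_block in \<open>auto simp: blocks_at_def\<close>)
  finally show ?thesis .
qed

lemma sum_incidences:
  fixes f :: "'a set \<Rightarrow> 'b::comm_semiring_1"
  assumes "finite S" "P \<subseteq> D"
  shows "(\<Sum>x\<in>S. \<Sum>B\<in>{B\<in>P. x \<in> B}. f B) = (\<Sum>B\<in>P. of_nat (card (B \<inter> S)) * f B)"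
proof -
  have P: "finite P" using finite_blocks assms(2) finite_subset by blast
  have "(\<Sum>x\<in>S. \<Sum>B\<in>{B\<in>P. x \<in> B}. f B) = (\<Sum>x\<in>S. \<Sum>B\<in>P. if x \<in> B then f B else 0)"
    by (simp add: sum.inter_filter P)
  also have "\<dots> = (\<Sum>B\<in>P. \<Sum>x\<in>S. if x \<in> B then f B else 0)"
    by (rule sum.swap)
  also have "\<dots> = (\<Sum>B\<in>P. of_nat (card (B \<inter> S)) * f B)"
    by (simp add: sum.If_cases[OF \<open>finite S\<close>] Int_commute)
  finally show ?thesis .
qed

lemma sum_card_triangles_at:
  "finite S \<Longrightarrow> (\<Sum>x\<in>S. card (triangles_at x)) = (\<Sum>B\<in>triangles. card (B \<inter> S))"
  using sum_incidences[OF _ triangles_subset, of S "\<lambda>_. 1::nat"]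
  unfolding triangles_at_def by simp

lemma degree_equation:
  assumes x: "x \<in> V"
  shows "2 * card (triangles_at x) + 3 * card (quads_at x) = card V - 1"
proof -
  have "card V - 1 = (\<Sum>B\<in>blocks_at x. card ((B - {x}) \<inter> V))"
    using card_Diff_eq_sum_blocks_at[OF x subset_refl] x finite_vertices by simp
  also have "\<dots> = (\<Sum>B\<in>blocks_at x. card B - 1)"
  proof (rule sum.cong[OF refl])
    fix B assume "B \<in> blocks_at x"
    then have "(B - {x}) \<inter> V = B - {x}" "x \<in> B" "finite B"
      using block_subset finite_block unfolding blocks_at_def by auto
    then show "card ((B - {x}) \<inter> V) = card B - 1" by simp
  qed
  also have "\<dots> = (\<Sum>B\<in>triangles_at x. card B - 1) + (\<Sum>B\<in>quads_at x. card B - 1)"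
    by (rule sum_blocks_at_split)
  also have "\<dots> = 2 * card (triangles_at x) + 3 * card (quads_at x)"
    by (simp add: card_triangle card_quad triangles_at_def quads_at_def)
  finally show ?thesis by simp
qed

lemma sum_pairs_in_blocks:
  assumes "S \<subseteq> V"
  shows "(\<Sum>B\<in>D. card (B \<inter> S) * (card (B \<inter> S) - 1)) = card S * (card S - 1)"
proof -
  have S: "finite S" using assms finite_vertices finite_subset by blast
  have "card S * (card S - 1) = (\<Sum>x\<in>S. card (S - {x}))"
    using S by simp
  also have "\<dots> = (\<Sum>x\<in>S. \<Sum>B\<in>{B\<in>D. x \<in> B}. card (B \<inter> S) - 1)"
  proof (rule sum.cong[OF refl])
    fix x assume x: "x \<in> S"
    have "card (S - {x}) = (\<Sum>B\<in>blocks_at x. card ((B - {x}) \<inter> S))"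
      using card_Diff_eq_sum_blocks_at assms x by blast
    also have "\<dots> = (\<Sum>B\<in>blocks_at x. card (B \<inter> S) - 1)"
    proof (rule sum.cong[OF refl])
      fix B assume "B \<in> blocks_at x"
      then have "(B - {x}) \<inter> S = B \<inter> S - {x}" "x \<in> B \<inter> S" "finite (B \<inter> S)"
        using x finite_block unfolding blocks_at_def by auto
      then show "card ((B - {x}) \<inter> S) = card (B \<inter> S) - 1" by simp
    qed
    finally show "card (S - {x}) = (\<Sum>B\<in>{B\<in>D. x \<in> B}. card (B \<inter> S) - 1)"
      unfolding blocks_at_def .
  qed
  also have "\<dots> = (\<Sum>B\<in>D. card (B \<inter> S) * (card (B \<inter> S) - 1))"
    using sum_incidences[OF S subset_refl, of "\<lambda>B. card (B \<inter> S) - 1"] by simp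
  finally show ?thesis ..
qed

end
locale K18_counterexample = K34_decomposition_of +
  assumes card_vertices: "card V = 18" and alpha_eq_13: "alpha D = 13"
    and tcount_profile: "tcount V D 0 = 0" "tcount V D 1 = 0" "tcount V D 2 = 11" "tcount V D 3 = 2"
begin

definition W :: "'a set" where
  "W = Wset V D"

definition N :: "'a set" where
  "N = V - W"

definition weight :: "'a set \<Rightarrow> nat" where
  "weight K = card (K \<inter> W)"

definition quad_count :: "nat \<Rightarrow> nat" where
  "quad_count j = card {K\<in>quads. weight K = j}"

lemma W_eq: "W = {x\<in>V. card (triangles_at x) \<ge> 2}"
  unfolding W_def Wset_def alpha_at_eq_card_triangles_at ..

lemma W_subset: "W \<subseteq> V" and N_subset: "N \<subseteq> V"
  unfolding W_eq N_def by auto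

lemma finite_W: "finite W" and finite_N: "finite N"
  using finite_vertices W_subset N_subset finite_subset by blast+

lemma in_N_iff: "x \<in> N \<longleftrightarrow> x \<in> V \<and> x \<notin> W"
  unfolding N_def by blast

lemma card_Int_W_add_card_Int_N:
  assumes "B \<in> D" shows "card (B \<inter> W) + card (B \<inter> N) = card B"
proof -
  have "B = (B \<inter> W) \<union> (B \<inter> N)" "(B \<inter> W) \<inter> (B \<inter> N) = {}"
    using block_subset[OF assms] unfolding N_def by auto
  then show ?thesis
    using finite_block[OF assms] card_Un_disjoint[of "B \<inter> W" "B \<inter> N"] by (metis finite_Int)
qed

lemma weight_add_card_Int_N: "K \<in> quads \<Longrightarrow> weight K + card (K \<inter> N) = 4"
  using card_Int_W_add_card_Int_N card_quad quads_subset unfolding weight_def by fastforce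

lemma sum_triangles_by_W:
  fixes f :: "nat \<Rightarrow> nat"
  shows "(\<Sum>B\<in>triangles. f (card (B \<inter> W))) = 11 * f 2 + 2 * f 3"
proof -
  have "(\<lambda>B. card (B \<inter> W)) ` triangles \<subseteq> {0, 1, 2, 3}"
  proof (rule image_subsetI)
    fix B assume "B \<in> triangles"
    then have "card (B \<inter> W) \<le> 3"
      using card_Int_W_add_card_Int_N card_triangle triangles_subset by fastforce
    then show "card (B \<inter> W) \<in> {0, 1, 2, 3}" by auto
  qed
  from sum_comp_eq_sum_card_fibres[OF finite_triangles _ this, of f]
  show ?thesis
    using tcount_profile unfolding tcount_def W_def triangles_def by (simp add: conj_assoc)
qed

lemma card_triangle_Int_W: "B \<in> triangles \<Longrightarrow> card (B \<inter> W) = 2 \<or> card (B \<inter> W) = 3"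
proof (rule ccontr)
  assume B: "B \<in> triangles" "\<not> (card (B \<inter> W) = 2 \<or> card (B \<inter> W) = 3)"
  have "(\<Sum>B\<in>triangles. (if card (B \<inter> W) = 2 \<or> card (B \<inter> W) = 3 then 0 else 1)) = (0::nat)"
    using sum_triangles_by_W[of "\<lambda>i. if i = 2 \<or> i = 3 then 0 else 1"] by simp
  then have "\<forall>B'\<in>triangles. (if card (B' \<inter> W) = 2 \<or> card (B' \<inter> W) = 3 then 0 else 1) = (0::nat)"
    by (subst (asm) sum_eq_0_iff[OF finite_triangles])
  with B show False by auto
qed

lemma card_triangle_Int_N_le_1: "B \<in> triangles \<Longrightarrow> card (B \<inter> N) \<le> 1"
  using card_Int_W_add_card_Int_N card_triangle card_triangle_Int_W triangles_subset by fastforce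

lemma triangle_Int_N:
  assumes "u \<in> N" "B \<in> triangles" "u \<in> B"
  shows "B \<inter> N = {u}"
proof -
  have "finite (B \<inter> N)" using assms finite_block triangles_subset by blast
  then show ?thesis
    using card_triangle_Int_N_le_1[OF assms(2)] assms by (auto simp: card_le_Suc0_iff_eq)
qed

lemma sum_card_triangles_at_W: "(\<Sum>x\<in>W. card (triangles_at x)) = 28"
  using sum_card_triangles_at[OF finite_W] sum_triangles_by_W[of id] by simp

lemma sum_card_triangles_at_N: "(\<Sum>x\<in>N. card (triangles_at x)) = 11"
proof -
  have "(\<Sum>x\<in>V. card (triangles_at x)) = (\<Sum>B\<in>triangles. card (B \<inter> V))"
    by (rule sum_card_triangles_at[OF finite_vertices])
  also have "\<dots> = (\<Sum>B\<in>triangles. 3)"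
    using card_triangle block_subset triangles_subset by (intro sum.cong) (auto simp: Int_absorb2)
  finally have "(\<Sum>x\<in>V. card (triangles_at x)) = 39"
    using alpha_eq_13 alpha_eq_card_triangles by simp
  moreover have "V = W \<union> N" and disjoint: "W \<inter> N = {}"
    using W_subset unfolding N_def by auto
  ultimately have "(\<Sum>x\<in>W. card (triangles_at x)) + (\<Sum>x\<in>N. card (triangles_at x)) = 39"
    using sum.union_disjoint[OF finite_W finite_N disjoint, of "\<lambda>x. card (triangles_at x)"] by simp
  then show ?thesis
    using sum_card_triangles_at_W by simp
qed

lemma degree_equation_18: "x \<in> V \<Longrightarrow> 2 * card (triangles_at x) + 3 * card (quads_at x) = 17"
  using degree_equation card_vertices by simp

lemma N_degrees:
  assumes "x \<in> N"
  shows "card (triangles_at x) = 1" "card (quads_at x) = 5"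
proof -
  have "card (triangles_at x) < 2" "2 * card (triangles_at x) + 3 * card (quads_at x) = 17"
    using assms degree_equation_18 unfolding in_N_iff W_eq by auto
  then show "card (triangles_at x) = 1" "card (quads_at x) = 5" by presburger+
qed

lemma card_N: "card N = 11" and card_W: "card W = 7"
proof -
  show "card N = 11"
    using sum_card_triangles_at_N N_degrees(1) by simp
  then show "card W = 7"
    using card_vertices card_Diff_subset[OF finite_W W_subset] card_mono[OF finite_vertices W_subset]
    unfolding N_def by simp
qed

text \<open>Since \<open>2 t + 3 q = 17\<close>, a vertex of \<open>W\<close> lies in at least four triangles, and the total
  of 28 leaves no room for more.\<close>

lemma W_degrees:
  assumes x: "x \<in> W"
  shows "card (triangles_at x) = 4" "card (quads_at x) = 3"
proof -
  have ge4: "card (triangles_at y) \<ge> 4" if "y \<in> W" for y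
  proof -
    have "card (triangles_at y) \<ge> 2" "2 * card (triangles_at y) + 3 * card (quads_at y) = 17"
      using that degree_equation_18 W_eq by auto
    then show ?thesis by presburger
  qed
  have "(\<Sum>y\<in>W. card (triangles_at y)) = card (triangles_at x) + (\<Sum>y\<in>W - {x}. card (triangles_at y))"
    using x finite_W by (simp add: sum.remove)
  moreover have "(\<Sum>y\<in>W - {x}. card (triangles_at y)) \<ge> (\<Sum>y\<in>W - {x}. 4)"
    using ge4 by (intro sum_mono) auto
  moreover have "(\<Sum>y\<in>W - {x}. 4::nat) = 24"
    using card_W x finite_W by simp
  ultimately show "card (triangles_at x) = 4"
    using sum_card_triangles_at_W ge4[OF x] by linarith
  then show "card (quads_at x) = 3"
    using degree_equation_18[of x] x W_subset by auto
qed

lemma quad_count_eq_0_iff: "quad_count j = 0 \<longleftrightarrow> (\<forall>K\<in>quads. weight K \<noteq> j)"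
  using finite_quads unfolding quad_count_def by auto

lemma sum_quads_by_weight:
  fixes f :: "nat \<Rightarrow> 'b::comm_semiring_1"
  shows "(\<Sum>K\<in>quads. f (weight K)) = (\<Sum>j\<in>{0, 1, 2, 3, 4}. of_nat (quad_count j) * f j)"
proof -
  have "weight ` quads \<subseteq> {0, 1, 2, 3, 4}"
  proof (rule image_subsetI)
    fix K assume "K \<in> quads"
    then have "weight K \<le> 4" using weight_add_card_Int_N by fastforce
    then show "weight K \<in> {0, 1, 2, 3, 4}" by auto
  qed
  from sum_comp_eq_sum_card_fibres[OF finite_quads _ this, of f]
  show ?thesis unfolding quad_count_def by simp
qed

lemma triangle_at_N_unique:
  assumes "u \<in> N" "B \<in> triangles_at u" "B' \<in> triangles_at u"
  shows "B = B'"
  using N_degrees(1)[OF assms(1)] assms(2,3) by (metis card_1_singletonE singletonD)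

lemma sum_weight_quads_at_N:
  assumes v: "v \<in> N"
  shows "(\<Sum>K\<in>quads_at v. weight K) = 5"
proof -
  have vV: "v \<in> V" and vW: "v \<notin> W" using v unfolding in_N_iff by auto
  obtain B0 where B0: "triangles_at v = {B0}"
    using N_degrees(1)[OF v] card_1_singletonE by blast
  then have "B0 \<in> triangles" "B0 \<inter> N = {v}"
    using triangle_Int_N[OF v] unfolding triangles_at_def by auto
  then have "card (B0 \<inter> W) = 2"
    using card_Int_W_add_card_Int_N card_triangle triangles_subset by fastforce
  then have triangle_part: "(\<Sum>B\<in>triangles_at v. card ((B - {v}) \<inter> W)) = 2"
    using B0 vW by (simp add: Diff_singleton_Int_eq)
  have "7 = card (W - {v})" using vW card_W by simp
  also have "\<dots> = (\<Sum>B\<in>blocks_at v. card ((B - {v}) \<inter> W))"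
    using card_Diff_eq_sum_blocks_at[OF vV W_subset] .
  also have "\<dots> = 2 + (\<Sum>B\<in>quads_at v. card ((B - {v}) \<inter> W))"
    by (simp only: sum_blocks_at_split triangle_part)
  also have "(\<Sum>B\<in>quads_at v. card ((B - {v}) \<inter> W)) = (\<Sum>K\<in>quads_at v. weight K)"
    using vW unfolding weight_def by (simp add: Diff_singleton_Int_eq)
  finally show ?thesis by simp
qed

lemma N_balance:
  assumes "v \<in> N"
  shows "(\<Sum>K\<in>quads_at v. 1 - int (weight K)) = 0"
  using sum_weight_quads_at_N[OF assms] N_degrees(2)[OF assms] by (simp add: sum_subtractf flip: of_nat_sum)

lemma sum_weight_pairs: "(\<Sum>K\<in>quads. weight K * (weight K - 1)) = 8"
proof -
  have "42 = (\<Sum>B\<in>D. card (B \<inter> W) * (card (B \<inter> W) - 1))"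
    using sum_pairs_in_blocks[OF W_subset] card_W by simp
  also have "\<dots> = (\<Sum>B\<in>triangles. card (B \<inter> W) * (card (B \<inter> W) - 1))
                 + (\<Sum>K\<in>quads. weight K * (weight K - 1))"
    unfolding weight_def by (rule sum_blocks_split)
  also have "(\<Sum>B\<in>triangles. card (B \<inter> W) * (card (B \<inter> W) - 1)) = 34"
    using sum_triangles_by_W[of "\<lambda>i. i * (i - 1)"] by simp
  finally show ?thesis by simp
qed

lemma sum_N_balance: "(\<Sum>K\<in>quads. (4 - int (weight K)) * (1 - int (weight K))) = 0"
proof -
  have "0 = (\<Sum>v\<in>N. \<Sum>K\<in>{K\<in>quads. v \<in> K}. 1 - int (weight K))"
    using N_balance unfolding quads_at_def by simp
  also have "\<dots> = (\<Sum>K\<in>quads. int (card (K \<inter> N)) * (1 - int (weight K)))"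
    using sum_incidences[OF finite_N quads_subset, of "\<lambda>K. 1 - int (weight K)"] by simp
  also have "\<dots> = (\<Sum>K\<in>quads. (4 - int (weight K)) * (1 - int (weight K)))"
  proof (rule sum.cong[OF refl])
    fix K assume "K \<in> quads"
    then have "int (card (K \<inter> N)) = 4 - int (weight K)"
      using weight_add_card_Int_N by fastforce
    then show "int (card (K \<inter> N)) * (1 - int (weight K)) = (4 - int (weight K)) * (1 - int (weight K))"
      by simp
  qed
  finally show ?thesis by simp
qed

lemma quad_count_equations:
  "2 * quad_count 2 + 6 * quad_count 3 + 12 * quad_count 4 = 8"
  "2 * quad_count 0 = quad_count 2 + quad_count 3"
proof -
  have "(\<Sum>K\<in>quads. weight K * (weight K - 1))
      = (\<Sum>j\<in>{0, 1, 2, 3, 4}. quad_count j * (j * (j - 1)))"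
    using sum_quads_by_weight[of "\<lambda>j. j * (j - 1) :: nat"] by simp
  then show "2 * quad_count 2 + 6 * quad_count 3 + 12 * quad_count 4 = 8"
    using sum_weight_pairs by simp
  have "(\<Sum>K\<in>quads. (4 - int (weight K)) * (1 - int (weight K)))
      = (\<Sum>j\<in>{0, 1, 2, 3, 4}. int (quad_count j) * ((4 - int j) * (1 - int j)))"
    using sum_quads_by_weight[of "\<lambda>j. (4 - int j) * (1 - int j)"] by simp
  then have "4 * int (quad_count 0) = 2 * int (quad_count 2) + 2 * int (quad_count 3)"
    using sum_N_balance by simp
  then show "2 * quad_count 0 = quad_count 2 + quad_count 3" by simp
qed

lemma quad_count_4: "quad_count 4 = 0"
  using quad_count_equations(1) by linarith

lemma quad_count_cases:
  "(quad_count 3 = 0 \<and> quad_count 0 = 2) \<or> (quad_count 2 = 1 \<and> quad_count 0 = 1)"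
proof -
  have "quad_count 2 + 3 * quad_count 3 = 4"
    using quad_count_equations(1) quad_count_4 by linarith
  then consider "quad_count 3 = 0" | "quad_count 3 = 1" by linarith
  then show ?thesis
    using quad_count_equations \<open>quad_count 2 + 3 * quad_count 3 = 4\<close> by cases linarith+
qed

text \<open>A quad of weight at least two through \<open>v \<in> N\<close> must be compensated, in the balance
  at \<open>v\<close>, by a quad of weight zero.\<close>

lemma N_quad_of_weight_0_exists:
  assumes v: "v \<in> N" and K: "K \<in> quads_at v" "weight K \<ge> 2"
  shows "\<exists>K'\<in>quads_at v. weight K' = 0"
proof (rule ccontr)
  assume "\<not> ?thesis"
  then have pos: "\<forall>K'\<in>quads_at v. weight K' \<ge> 1" by (metis less_one not_le)
  have "(\<Sum>K'\<in>quads_at v. 1 - int (weight K'))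
      = (1 - int (weight K)) + (\<Sum>K'\<in>quads_at v - {K}. 1 - int (weight K'))"
    using K finite_quads_at by (simp add: sum.remove)
  also have "(\<Sum>K'\<in>quads_at v - {K}. 1 - int (weight K')) \<le> 0"
    using pos by (intro sum_nonpos) auto
  finally have "(\<Sum>K'\<in>quads_at v. 1 - int (weight K')) < 0" using K by simp
  with N_balance[OF v] show False by simp
qed

lemma weight_0_imp_subset_N:
  assumes "K \<in> quads" "weight K = 0"
  shows "K \<subseteq> N"
proof -
  have "K \<in> D" using assms(1) quads_subset by blast
  then have "K \<inter> W = {}"
    using assms(2) finite_block unfolding weight_def by simp
  with block_subset[OF \<open>K \<in> D\<close>] show ?thesis unfolding N_def by blast
qed

lemma W_N_incidences:
  assumes w: "w \<in> W"
  shows "(\<Sum>K\<in>quads_at w. card (K \<inter> N)) \<ge> 7"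
proof -
  have wV: "w \<in> V" and wN: "w \<notin> N" using w W_subset unfolding in_N_iff by auto
  have "11 = card (N - {w})" using wN card_N by simp
  also have "\<dots> = (\<Sum>B\<in>blocks_at w. card ((B - {w}) \<inter> N))"
    using card_Diff_eq_sum_blocks_at[OF wV N_subset] .
  also have "\<dots> = (\<Sum>B\<in>triangles_at w. card (B \<inter> N)) + (\<Sum>K\<in>quads_at w. card (K \<inter> N))"
    using wN by (simp add: sum_blocks_at_split Diff_singleton_Int_eq)
  also have "(\<Sum>B\<in>triangles_at w. card (B \<inter> N)) \<le> (\<Sum>B\<in>triangles_at w. 1)"
    using card_triangle_Int_N_le_1 unfolding triangles_at_def by (intro sum_mono) auto
  also have "(\<Sum>B\<in>triangles_at w. 1::nat) = 4"
    using W_degrees(1)[OF w] by simp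
  finally show ?thesis by simp
qed

lemma single_heavy_quad_impossible:
  assumes "quad_count 2 = 1" "quad_count 0 = 1"
  shows False
proof -
  obtain K where K: "{K\<in>quads. weight K = 2} = {K}"
    using assms(1) card_1_singletonE unfolding quad_count_def by blast
  then have KQ: "K \<in> quads" "weight K = 2" by auto
  then obtain u v where uv: "K \<inter> N = {u, v}" "u \<noteq> v"
    using weight_add_card_Int_N[of K] by (auto simp: card_2_iff)
  obtain Z where Z: "{K\<in>quads. weight K = 0} = {Z}"
    using assms(2) card_1_singletonE unfolding quad_count_def by blast
  have in_Z: "x \<in> Z" if "x \<in> K \<inter> N" for x
  proof -
    have "x \<in> N" "K \<in> quads_at x" using that KQ unfolding quads_at_def by auto
    then obtain K' where "K' \<in> quads_at x" "weight K' = 0"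
      using N_quad_of_weight_0_exists KQ by fastforce
    moreover from this have "K' = Z" using Z unfolding quads_at_def by auto
    ultimately show "x \<in> Z" unfolding quads_at_def by auto
  qed
  have "Z \<in> quads" "weight Z = 0" using Z by auto
  moreover have "K = Z"
    using block_unique[of K Z u v] in_Z uv KQ \<open>Z \<in> quads\<close> quads_subset by auto
  ultimately show False using KQ by simp
qed

lemma W_vertex_has_light_quad:
  assumes "w \<in> W"
  shows "\<exists>K\<in>quads_at w. weight K \<le> 1"
proof (rule ccontr)
  assume "\<not> ?thesis"
  then have "\<forall>K\<in>quads_at w. card (K \<inter> N) \<le> 2"
    using weight_add_card_Int_N unfolding quads_at_def by fastforce
  then have "(\<Sum>K\<in>quads_at w. card (K \<inter> N)) \<le> (\<Sum>K\<in>quads_at w. 2)"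
    by (intro sum_mono) auto
  with W_N_incidences[OF assms] W_degrees(2)[OF assms] show False by simp
qed

lemma quad_through_W_and_N:
  assumes u: "u \<in> N" "B \<in> triangles" "w0 \<in> B" "u \<in> B"
    and K: "K \<in> D" "w0 \<in> K" "w \<in> K" "w \<noteq> w0" "u \<notin> K" and w: "w \<in> V"
  shows "\<exists>L\<in>quads. w \<in> L \<and> u \<in> L \<and> L \<noteq> K"
proof -
  have "u \<noteq> w" using u K by auto
  then obtain L where L: "L \<in> D" "w \<in> L" "u \<in> L"
    using block_exists[of w u] u N_subset w by auto
  have "L \<notin> triangles"
  proof
    assume "L \<in> triangles"
    then have "L = B"
      using triangle_at_N_unique[OF u(1)] u L unfolding triangles_at_def by auto
    then have "L = K" using block_unique[of L K w0 w] L u K by auto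
    with L K show False by auto
  qed
  with L K triangle_or_quad show ?thesis by auto
qed

end

locale K18_two_N_quads = K18_counterexample +
  fixes Z1 Z2 :: "'a set"
  assumes no_quad_of_weight_3: "quad_count 3 = 0"
    and weight_0_quads: "{K\<in>quads. weight K = 0} = {Z1, Z2}"
    and Z1_neq_Z2: "Z1 \<noteq> Z2"
begin

lemma weight_le_2:
  assumes "K \<in> quads" shows "weight K \<le> 2"
proof -
  have "weight K \<le> 4" using weight_add_card_Int_N[OF assms] by linarith
  moreover have "weight K \<noteq> 3" "weight K \<noteq> 4"
    using assms quad_count_4 no_quad_of_weight_3 unfolding quad_count_eq_0_iff by blast+
  ultimately show ?thesis by linarith
qed

lemma Z_quads: "Z1 \<in> quads" "Z2 \<in> quads" "weight Z1 = 0" "weight Z2 = 0"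
  using weight_0_quads by blast+

lemma Z_blocks: "Z1 \<in> D" "Z2 \<in> D"
  using Z_quads quads_subset by blast+

lemma Z_subset_N: "Z1 \<subseteq> N" "Z2 \<subseteq> N"
  using Z_quads weight_0_imp_subset_N by blast+

lemma weight_0_iff: "K \<in> quads \<Longrightarrow> weight K = 0 \<longleftrightarrow> K = Z1 \<or> K = Z2"
  using weight_0_quads Z_quads by blast

lemma quad_at_W_neq_Z: "w \<in> K \<Longrightarrow> w \<in> W \<Longrightarrow> K \<noteq> Z1 \<and> K \<noteq> Z2"
  using Z_subset_N in_N_iff by blast

lemma card_Int_Z_le_1:
  "K \<in> D \<Longrightarrow> K \<noteq> Z1 \<Longrightarrow> card (K \<inter> Z1) \<le> 1"
  "K \<in> D \<Longrightarrow> K \<noteq> Z2 \<Longrightarrow> card (K \<inter> Z2) \<le> 1"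
  using card_block_Int_le_1 Z_blocks by auto

lemma card_quads_at_weight_0:
  "card {K\<in>quads_at v. weight K = 0} = (if v \<in> Z1 then 1 else 0) + (if v \<in> Z2 then 1 else 0)"
proof -
  have "{K\<in>quads_at v. weight K = 0} = {K\<in>{Z1, Z2}. v \<in> K}"
  proof (rule set_eqI)
    fix K show "K \<in> {K\<in>quads_at v. weight K = 0} \<longleftrightarrow> K \<in> {K\<in>{Z1, Z2}. v \<in> K}"
      using weight_0_iff[of K] Z_quads unfolding quads_at_def by auto
  qed
  also have "{K\<in>{Z1, Z2}. v \<in> K} = (if v \<in> Z1 then {Z1} else {}) \<union> (if v \<in> Z2 then {Z2} else {})"
    by auto
  finally show ?thesis using Z1_neq_Z2 by simp
qed

text \<open>With all weights in \<open>{0, 1, 2}\<close>, the balance at an \<open>N\<close>-vertex pairs quads of weight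
  zero with quads of weight two.\<close>

lemma card_quads_at_weight_2:
  assumes v: "v \<in> N"
  shows "card {K\<in>quads_at v. weight K = 2} = card {K\<in>quads_at v. weight K = 0}"
proof -
  have "(\<Sum>K\<in>quads_at v. 1 - int (weight K))
      = (\<Sum>K\<in>quads_at v. (if weight K = 0 then 1 else 0) - (if weight K = 2 then 1 else 0))"
  proof (rule sum.cong[OF refl])
    fix K assume "K \<in> quads_at v"
    then have "weight K \<le> 2" using weight_le_2 unfolding quads_at_def by auto
    then show "1 - int (weight K) = (if weight K = 0 then 1 else 0) - (if weight K = 2 then 1 else 0)"
      by (auto simp: le_Suc_eq numeral_2_eq_2)
  qed
  also have "\<dots> = int (card {K\<in>quads_at v. weight K = 0}) - int (card {K\<in>quads_at v. weight K = 2})"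
    using finite_quads_at by (simp add: sum_subtractf sum.If_cases Int_def)
  finally show ?thesis using N_balance[OF v] by simp
qed

lemma heavy_quad_vertex_in_Z:
  assumes "v \<in> N" "K \<in> quads" "v \<in> K" "weight K = 2"
  shows "v \<in> Z1 \<or> v \<in> Z2"
proof -
  obtain K' where "K' \<in> quads_at v" "weight K' = 0"
    using N_quad_of_weight_0_exists assms unfolding quads_at_def by fastforce
  with weight_0_iff show ?thesis unfolding quads_at_def by auto
qed

lemma heavy_quad_meets_Z1_and_Z2:
  assumes K: "K \<in> quads" "weight K = 2"
  shows "\<exists>a b. K \<inter> N = {a, b} \<and> a \<noteq> b \<and> a \<in> Z1 \<and> b \<in> Z2"
proof -
  obtain u v where uv: "K \<inter> N = {u, v}" "u \<noteq> v"
    using weight_add_card_Int_N[OF K(1)] K(2) by (auto simp: card_2_iff)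
  then have "u \<in> Z1 \<or> u \<in> Z2" "v \<in> Z1 \<or> v \<in> Z2"
    using heavy_quad_vertex_in_Z K by blast+
  moreover have "K \<noteq> Z1" "K \<noteq> Z2" using K Z_quads by auto
  then have "\<not> (u \<in> Z1 \<and> v \<in> Z1)" "\<not> (u \<in> Z2 \<and> v \<in> Z2)"
    using block_unique[of K Z1 u v] block_unique[of K Z2 u v] uv K(1) quads_subset Z_blocks
    by auto
  ultimately consider "u \<in> Z1" "v \<in> Z2" | "v \<in> Z1" "u \<in> Z2" by blast
  then show ?thesis
  proof cases
    case 1
    with uv show ?thesis by blast
  next
    case 2
    with uv show ?thesis by (metis insert_commute)
  qed
qed

lemma Z1_Int_Z2: "Z1 \<inter> Z2 = {}"
proof (rule ccontr)
  assume "Z1 \<inter> Z2 \<noteq> {}"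
  then obtain p where p: "p \<in> Z1" "p \<in> Z2" by blast
  then have "p \<in> N" using Z_subset_N by auto
  then have "card {K\<in>quads_at p. weight K = 2} = 2"
    using card_quads_at_weight_2 card_quads_at_weight_0[of p] p by simp
  then have "{K\<in>quads_at p. weight K = 2} \<noteq> {}" by (metis card.empty zero_neq_numeral)
  then obtain K where "K \<in> quads" "p \<in> K" "weight K = 2"
    unfolding quads_at_def by blast
  with heavy_quad_meets_Z1_and_Z2 obtain a b
    where ab: "K \<inter> N = {a, b}" "a \<noteq> b" "a \<in> Z1" "b \<in> Z2"
    by blast
  have "K \<noteq> Z1" "K \<noteq> Z2" using \<open>weight K = 2\<close> Z_quads by auto
  moreover have "p = a \<or> p = b" using ab \<open>p \<in> K\<close> \<open>p \<in> N\<close> by blast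
  ultimately show False
    using block_unique[of K Z1 p a] block_unique[of K Z2 p b] ab p \<open>p \<in> K\<close>
      \<open>K \<in> quads\<close> quads_subset Z_blocks by auto
qed

definition heavy_quad :: "'a \<Rightarrow> 'a set" where
  "heavy_quad v = (THE K. K \<in> quads \<and> v \<in> K \<and> weight K = 2)"

definition R :: "'a set" where
  "R = N - Z1 - Z2"

lemma ex1_heavy_quad:
  assumes "v \<in> Z1 \<union> Z2"
  shows "\<exists>!K. K \<in> quads \<and> v \<in> K \<and> weight K = 2"
proof -
  have "v \<in> N" using assms Z_subset_N by blast
  moreover have "card {K\<in>quads_at v. weight K = 0} = 1"
  proof -
    have "v \<in> Z1 \<and> v \<notin> Z2 \<or> v \<in> Z2 \<and> v \<notin> Z1" using assms Z1_Int_Z2 by blast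
    then show ?thesis using card_quads_at_weight_0[of v] by auto
  qed
  ultimately have "card {K\<in>quads_at v. weight K = 2} = 1"
    using card_quads_at_weight_2 by simp
  then obtain K where K: "{K\<in>quads_at v. weight K = 2} = {K}"
    using card_1_singletonE by blast
  show ?thesis
  proof (rule ex1I)
    show "K \<in> quads \<and> v \<in> K \<and> weight K = 2" using K unfolding quads_at_def by blast
    show "K' = K" if "K' \<in> quads \<and> v \<in> K' \<and> weight K' = 2" for K'
      using K that unfolding quads_at_def by blast
  qed
qed

lemma heavy_quad:
  assumes "v \<in> Z1 \<union> Z2"
  shows "heavy_quad v \<in> quads" "v \<in> heavy_quad v" "weight (heavy_quad v) = 2"
  using theI'[OF ex1_heavy_quad[OF assms]] unfolding heavy_quad_def by blast+

lemma heavy_quad_eq: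
  assumes "v \<in> Z1 \<union> Z2" "K \<in> quads" "v \<in> K" "weight K = 2"
  shows "heavy_quad v = K"
  using ex1_heavy_quad[OF assms(1)] heavy_quad[OF assms(1)] assms(2-4) by blast

lemma block_meets_Z_once:
  assumes "K \<in> D" "Z \<in> {Z1, Z2}" "K \<noteq> Z" "u \<in> K \<inter> Z" "u' \<in> K \<inter> Z"
  shows "u = u'"
  using assms block_unique[of K Z u u'] Z_blocks by blast

lemma R_weight:
  assumes "s \<in> R" "K \<in> quads" "s \<in> K"
  shows "weight K = 1"
proof -
  have s: "s \<in> N" "s \<notin> Z1" "s \<notin> Z2" using assms(1) unfolding R_def by auto
  have "weight K \<noteq> 2"
    using heavy_quad_vertex_in_Z[OF s(1) assms(2,3)] s by blast
  moreover have "weight K \<noteq> 0" using weight_0_iff[OF assms(2)] s assms(3) by blast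
  ultimately show ?thesis using weight_le_2[OF assms(2)] by linarith
qed

lemma card_R: "card R = 3"
proof -
  have "card (Z1 \<union> Z2) = 8"
    using card_Un_disjoint[of Z1 Z2] Z1_Int_Z2 Z_quads card_quad finite_block Z_blocks by simp
  moreover have "R = N - (Z1 \<union> Z2)" "Z1 \<union> Z2 \<subseteq> N" unfolding R_def using Z_subset_N by auto
  ultimately show ?thesis
    using card_Diff_subset[of "Z1 \<union> Z2" N] card_N finite_subset[OF _ finite_N] by auto
qed

lemma N_eq: "N = Z1 \<union> Z2 \<union> R"
  unfolding R_def using Z_subset_N by blast

lemma pair_in_N_block_is_quad:
  assumes "s \<in> N" "t \<in> N" "s \<noteq> t" "B \<in> D" "s \<in> B" "t \<in> B"
  shows "B \<in> quads"
proof -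
  have "B \<notin> triangles"
  proof
    assume "B \<in> triangles"
    then have "B \<inter> N = {s}" using triangle_Int_N assms by blast
    moreover have "t \<in> B \<inter> N" using assms by blast
    ultimately show False using \<open>s \<noteq> t\<close> by simp
  qed
  with assms(4) triangle_or_quad show ?thesis by blast
qed

text \<open>Apart from \<open>s\<close> itself, such a quad meets \<open>N\<close> in two vertices of \<open>Z1 \<union> Z2\<close>, at most
  one from each.\<close>

lemma quad_meeting_R_once:
  assumes s: "s \<in> R" and L: "L \<in> quads" "L \<inter> R = {s}"
  shows "card (L \<inter> Z1) = 1"
proof -
  have LD: "L \<in> D" using L quads_subset by blast
  have "s \<in> L" "s \<notin> Z1" "s \<notin> Z2" using L s unfolding R_def by auto
  have "card (L \<inter> N) = 3"
    using R_weight[OF s L(1) \<open>s \<in> L\<close>] weight_add_card_Int_N[OF L(1)] by simp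
  moreover have "L \<inter> N = insert s ((L \<inter> Z1) \<union> (L \<inter> Z2))"
    using L(2) \<open>s \<in> L\<close> N_eq by blast
  moreover have "finite (L \<inter> Z1)" "finite (L \<inter> Z2)" using LD finite_block by auto
  ultimately have "card (L \<inter> Z1) + card (L \<inter> Z2) = 2"
    using \<open>s \<notin> Z1\<close> \<open>s \<notin> Z2\<close> Z1_Int_Z2 card_Un_disjoint[of "L \<inter> Z1" "L \<inter> Z2"] by auto
  moreover have "L \<noteq> Z1" "L \<noteq> Z2" using \<open>s \<in> L\<close> \<open>s \<notin> Z1\<close> \<open>s \<notin> Z2\<close> by auto
  then have "card (L \<inter> Z1) \<le> 1" "card (L \<inter> Z2) \<le> 1" using card_Int_Z_le_1 LD by auto
  ultimately show ?thesis by linarith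
qed

lemma sum_card_Z1_quads_at_R:
  assumes s: "s \<in> R"
  shows "(\<Sum>K\<in>quads_at s. card (K \<inter> Z1)) = 4"
proof -
  have sN: "s \<in> N" and sZ: "s \<notin> Z1" using s unfolding R_def by auto
  then have sV: "s \<in> V" unfolding in_N_iff by blast
  have triangle_part: "(\<Sum>B\<in>triangles_at s. card (B \<inter> Z1)) = 0"
  proof -
    have "B \<inter> Z1 = {}" if "B \<in> triangles_at s" for B
    proof -
      have "B \<inter> N = {s}"
        using triangle_Int_N[OF sN] that unfolding triangles_at_def by blast
      moreover have "B \<inter> Z1 = B \<inter> N \<inter> Z1" using Z_subset_N(1) by blast
      ultimately show ?thesis using sZ by simp
    qed
    then show ?thesis by simp
  qed
  have "4 = card (Z1 - {s})"
    using sZ Z_quads card_quad by simp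
  also have "\<dots> = (\<Sum>B\<in>blocks_at s. card ((B - {s}) \<inter> Z1))"
    using card_Diff_eq_sum_blocks_at[OF sV] Z_subset_N N_subset by blast
  also have "\<dots> = (\<Sum>K\<in>quads_at s. card (K \<inter> Z1))"
    using sZ by (simp add: sum_blocks_at_split triangle_part Diff_singleton_Int_eq)
  finally show ?thesis ..
qed

lemma R_subset_N: "R \<subseteq> N"
  unfolding R_def by blast

lemma R_Int_Z: "R \<inter> (Z1 \<union> Z2) = {}"
  unfolding R_def by blast

lemma pair_quads_Z1_balance:
  assumes R: "R = {s, t, t'}" "s \<noteq> t" "s \<noteq> t'" "t \<noteq> t'"
    and no_R_quad: "\<not> (\<exists>K\<in>quads. R \<subseteq> K)"
    and K: "K \<in> quads" "s \<in> K" "t \<in> K" and K': "K' \<in> quads" "s \<in> K'" "t' \<in> K'"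
  shows "card (K \<inter> Z1) + card (K' \<inter> Z1) = 1"
proof -
  have s: "s \<in> R" using R by blast
  have "\<not> R \<subseteq> K" "\<not> R \<subseteq> K'" using no_R_quad K(1) K'(1) by auto
  then have "t' \<notin> K" "t \<notin> K'" using R(1) K K' by auto
  then have KK': "K \<noteq> K'" using K(3) by blast
  have KD: "K \<in> D" "K' \<in> D" using K K' quads_subset by auto
  have rest: "card (L \<inter> Z1) = 1" if L: "L \<in> quads_at s - {K, K'}" for L
  proof -
    have LQ: "L \<in> quads" "s \<in> L" "L \<in> D" using L quads_subset unfolding quads_at_def by auto
    have "t \<notin> L" using block_unique[of L K s t] LQ KD K L R(2) by auto
    moreover have "t' \<notin> L" using block_unique[of L K' s t'] LQ KD K' L R(3) by auto
    ultimately have "L \<inter> R = {s}" using R(1) LQ(2) by auto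
    with quad_meeting_R_once[OF s LQ(1)] show ?thesis .
  qed
  have KK'_at: "K \<in> quads_at s" "K' \<in> quads_at s" using K K' unfolding quads_at_def by auto
  have "4 = (\<Sum>L\<in>quads_at s. card (L \<inter> Z1))"
    using sum_card_Z1_quads_at_R[OF s] ..
  also have "\<dots> = card (K \<inter> Z1) + card (K' \<inter> Z1) + (\<Sum>L\<in>quads_at s - {K, K'}. card (L \<inter> Z1))"
    using sum_remove_two[OF finite_quads_at KK'_at KK', of "\<lambda>L. card (L \<inter> Z1)"] by simp
  also have "(\<Sum>L\<in>quads_at s - {K, K'}. card (L \<inter> Z1)) = card (quads_at s - {K, K'})"
    using rest by simp
  also have "\<dots> = card (quads_at s) - card {K, K'}"
    using KK'_at by (intro card_Diff_subset) auto
  also have "\<dots> = 3"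
    using KK' N_degrees(2) s R_subset_N by auto
  finally show ?thesis by linarith
qed

lemma R_in_quad: "\<exists>K\<in>quads. R \<subseteq> K"
proof (rule ccontr)
  assume no_R_quad: "\<not> ?thesis"
  obtain x y z where R: "R = {x, y, z}" "x \<noteq> y" "x \<noteq> z" "y \<noteq> z"
    using card_R card_3_iff by metis
  have pair_quad: "\<exists>K\<in>quads. s \<in> K \<and> t \<in> K" if st: "s \<in> R" "t \<in> R" "s \<noteq> t" for s t
  proof -
    have "s \<in> N" "t \<in> N" using st R_subset_N by auto
    moreover obtain B where "B \<in> D" "s \<in> B" "t \<in> B"
      using block_exists[of s t] st R_subset_N N_subset by auto
    ultimately show ?thesis using pair_in_N_block_is_quad \<open>s \<noteq> t\<close> by blast
  qed
  obtain Kxy where "Kxy \<in> quads" "x \<in> Kxy" "y \<in> Kxy" using pair_quad[of x y] R by auto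
  obtain Kxz where "Kxz \<in> quads" "x \<in> Kxz" "z \<in> Kxz" using pair_quad[of x z] R by auto
  obtain Kyz where "Kyz \<in> quads" "y \<in> Kyz" "z \<in> Kyz" using pair_quad[of y z] R by auto
  have "card (Kxy \<inter> Z1) + card (Kxz \<inter> Z1) = 1"
    using pair_quads_Z1_balance[of x y z] R no_R_quad \<open>Kxy \<in> quads\<close> \<open>Kxz \<in> quads\<close>
      \<open>x \<in> Kxy\<close> \<open>y \<in> Kxy\<close> \<open>x \<in> Kxz\<close> \<open>z \<in> Kxz\<close> by blast
  moreover have "card (Kxy \<inter> Z1) + card (Kyz \<inter> Z1) = 1"
    using pair_quads_Z1_balance[of y x z] R no_R_quad \<open>Kxy \<in> quads\<close> \<open>Kyz \<in> quads\<close>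
      \<open>x \<in> Kxy\<close> \<open>y \<in> Kxy\<close> \<open>y \<in> Kyz\<close> \<open>z \<in> Kyz\<close> by (simp add: insert_commute)
  moreover have "card (Kxz \<inter> Z1) + card (Kyz \<inter> Z1) = 1"
    using pair_quads_Z1_balance[of z x y] R no_R_quad \<open>Kxz \<in> quads\<close> \<open>Kyz \<in> quads\<close>
      \<open>x \<in> Kxz\<close> \<open>z \<in> Kxz\<close> \<open>y \<in> Kyz\<close> \<open>z \<in> Kyz\<close> by (simp add: insert_commute)
  ultimately show False by presburger
qed

lemma heavy_quad_eq_if_mem:
  assumes "u \<in> Z1 \<union> Z2" "v \<in> Z1 \<union> Z2" "v \<in> heavy_quad u"
  shows "heavy_quad v = heavy_quad u"
  using heavy_quad_eq[OF assms(2)] heavy_quad[OF assms(1)] assms(3) by blast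

lemma heavy_quad_meets_Z_once:
  assumes "Z \<in> {Z1, Z2}" "u \<in> Z" "u' \<in> Z" "u' \<in> heavy_quad u"
  shows "u' = u"
proof -
  have u: "u \<in> Z1 \<union> Z2" using assms(1,2) by blast
  have "heavy_quad u \<noteq> Z"
    using heavy_quad(3)[OF u] Z_quads assms(1) by auto
  then show ?thesis
    using block_meets_Z_once[of "heavy_quad u" Z u' u] heavy_quad[OF u] quads_subset assms by blast
qed

lemma W_block_meets_Z_once:
  assumes "K \<in> D" "w \<in> K" "w \<in> W" "Z \<in> {Z1, Z2}" "u \<in> K \<inter> Z" "u' \<in> K \<inter> Z"
  shows "u = u'"
  using block_meets_Z_once[OF assms(1,4) _ assms(5,6)] quad_at_W_neq_Z[OF assms(2,3)] assms(4)
  by blast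

lemma quads_at_W_eq:
  assumes "w \<in> W" "{K1, K2, K3} \<subseteq> quads_at w" "K1 \<noteq> K2" "K1 \<noteq> K3" "K2 \<noteq> K3"
  shows "quads_at w = {K1, K2, K3}"
  using card_subset_eq[OF finite_quads_at assms(2)] W_degrees(2)[OF assms(1)] assms(3-5) by simp

lemma heavy_partners_distinct:
  assumes "a \<in> Z1" "a' \<in> Z1" "a \<noteq> a'" "b \<in> heavy_quad a" "b' \<in> heavy_quad a'"
    "b \<in> Z2" "b' \<in> Z2"
  shows "b \<noteq> b'"
proof
  assume "b = b'"
  have Z: "a \<in> Z1 \<union> Z2" "a' \<in> Z1 \<union> Z2" "b \<in> Z1 \<union> Z2" "b' \<in> Z1 \<union> Z2" using assms by auto
  have "heavy_quad a = heavy_quad a'"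
    using heavy_quad_eq_if_mem[OF Z(1,3) assms(4)] heavy_quad_eq_if_mem[OF Z(2,4) assms(5)] \<open>b = b'\<close>
    by simp
  then have "a' \<in> heavy_quad a" using heavy_quad(2)[OF Z(2)] by simp
  with heavy_quad_meets_Z_once[of Z1 a a'] assms(1-3) show False by simp
qed

text \<open>This is the heart of the case of a quad containing \<open>R\<close>: the two quads of \<open>w\<close> other than
  \<open>Kw\<close> cannot be the heavy quads of \<open>a\<close> and \<open>a'\<close>, since \<open>w\<close> needs a light quad, so they pair
  the partners crosswise.\<close>

lemma crossed_quad_exists:
  assumes w: "w \<in> W" and Kw: "Kw \<in> quads" "w \<in> Kw" "weight Kw = 2"
    and a: "a \<in> Z1" "a' \<in> Z1" "a \<noteq> a'"
    and b: "b \<in> heavy_quad a" "b \<in> Z2" "b' \<in> heavy_quad a'" "b' \<in> Z2"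
    and reach: "\<And>u. u \<in> {a, a', b, b'} \<Longrightarrow> \<exists>L\<in>quads. w \<in> L \<and> u \<in> L \<and> L \<noteq> Kw"
  shows "\<exists>L\<in>quads. w \<in> L \<and> a \<in> L \<and> b' \<in> L"
proof -
  obtain La where La: "La \<in> quads" "w \<in> La" "a \<in> La" "La \<noteq> Kw" using reach by blast
  obtain Lb where Lb: "Lb \<in> quads" "w \<in> Lb" "a' \<in> Lb" "Lb \<noteq> Kw" using reach by blast
  obtain L3 where L3: "L3 \<in> quads" "w \<in> L3" "b \<in> L3" "L3 \<noteq> Kw" using reach by blast
  obtain L4 where L4: "L4 \<in> quads" "w \<in> L4" "b' \<in> L4" "L4 \<noteq> Kw" using reach by blast
  have "La \<noteq> Lb"
    using W_block_meets_Z_once[of La w Z1 a a'] La Lb a w quads_subset by auto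
  have "L3 \<noteq> L4"
    using W_block_meets_Z_once[of L3 w Z2 b b'] heavy_partners_distinct[OF a b(1,3,2,4)]
      L3 L4 b(2,4) w quads_subset by auto
  have "{Kw, La, Lb} \<subseteq> quads_at w" using Kw La Lb unfolding quads_at_def by blast
  with quads_at_W_eq[OF w] have quads_w: "quads_at w = {Kw, La, Lb}"
    using La(4) Lb(4) \<open>La \<noteq> Lb\<close> by metis
  then have "L3 \<in> {La, Lb}" "L4 \<in> {La, Lb}" using L3 L4 unfolding quads_at_def by auto
  then consider "L4 = La" | "L3 = La" "L4 = Lb" using \<open>L3 \<noteq> L4\<close> by blast
  then show ?thesis
  proof cases
    case 1
    with La L4 show ?thesis by blast
  next
    case 2
    have Z: "a \<in> Z1 \<union> Z2" "a' \<in> Z1 \<union> Z2" using a by auto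
    have "a \<noteq> b" "a' \<noteq> b'" using a b Z1_Int_Z2 by auto
    have "La = heavy_quad a"
      using block_unique[of La "heavy_quad a" a b] heavy_quad[OF Z(1)] La L3 b(1) 2
        \<open>a \<noteq> b\<close> quads_subset by blast
    moreover have "Lb = heavy_quad a'"
      using block_unique[of Lb "heavy_quad a'" a' b'] heavy_quad[OF Z(2)] Lb L4 b(3) 2
        \<open>a' \<noteq> b'\<close> quads_subset by blast
    ultimately have "\<forall>K\<in>quads_at w. weight K = 2"
      using quads_w Kw(3) heavy_quad(3) Z by auto
    with W_vertex_has_light_quad[OF w] show ?thesis by fastforce
  qed
qed

lemma heavy_quad_partner_exists:
  assumes "a \<in> Z1" shows "\<exists>b\<in>Z2. b \<in> heavy_quad a"
  using heavy_quad_meets_Z1_and_Z2[OF heavy_quad(1,3)] assms by blast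

text \<open>The heavy quads partition \<open>Z1 \<union> Z2\<close>.\<close>

lemma heavy_quad_avoids:
  assumes K: "K \<in> quads" "weight K = 2" and v: "v \<in> Z1 \<union> Z2" "v \<notin> K"
    and u: "u \<in> Z1 \<union> Z2" "u \<in> heavy_quad v"
  shows "u \<notin> K"
proof
  assume "u \<in> K"
  then have "heavy_quad u = K" using heavy_quad_eq[OF u(1) K(1) _ K(2)] by blast
  moreover have "heavy_quad u = heavy_quad v" using heavy_quad_eq_if_mem[OF v(1) u] .
  ultimately show False using heavy_quad(2)[OF v(1)] v(2) by simp
qed

lemma quad_at_apex_light:
  assumes K0: "K0 \<in> quads" "K0 \<inter> N = R" "w0 \<in> K0" "w0 \<in> W"
    and K: "K \<in> quads" "w0 \<in> K" "K \<noteq> K0"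
  shows "card (K \<inter> N) \<le> 2"
proof -
  have "K \<inter> R = {}"
  proof (rule ccontr)
    assume "K \<inter> R \<noteq> {}"
    then obtain r where "r \<in> K" "r \<in> R" by blast
    then have "r \<in> K0" "r \<noteq> w0" using K0(2,4) in_N_iff by auto
    then have "K = K0"
      using block_unique[of K K0 w0 r] K K0(1,3) \<open>r \<in> K\<close> quads_subset by blast
    with K(3) show False ..
  qed
  then have "K \<inter> N = (K \<inter> Z1) \<union> (K \<inter> Z2)" using N_eq by blast
  then have "card (K \<inter> N) \<le> card (K \<inter> Z1) + card (K \<inter> Z2)"
    by (simp add: card_Un_le)
  moreover have "card (K \<inter> Z1) \<le> 1" "card (K \<inter> Z2) \<le> 1"
    using card_Int_Z_le_1 quad_at_W_neq_Z[OF K(2) K0(4)] K(1) quads_subset by auto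
  ultimately show ?thesis by linarith
qed

lemma R_quad_apex:
  assumes K0: "K0 \<in> quads" "R \<subseteq> K0"
  obtains w0 K' K'' where "w0 \<in> W" "w0 \<in> K0" "K0 \<inter> N = R" "quads_at w0 = {K0, K', K''}"
    "K' \<noteq> K''" "weight K' = 2" "weight K'' = 2"
proof -
  have "R \<noteq> {}" using card_R by auto
  then obtain s where "s \<in> R" by blast
  then have "weight K0 = 1" using R_weight K0 by blast
  then have "card (K0 \<inter> N) = 3" using weight_add_card_Int_N[OF K0(1)] by simp
  moreover have "R \<subseteq> K0 \<inter> N" using K0(2) R_subset_N by blast
  moreover have "finite (K0 \<inter> N)" using finite_N by blast
  ultimately have K0N: "K0 \<inter> N = R" using card_subset_eq card_R by metis
  obtain w0 where "K0 \<inter> W = {w0}"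
    using \<open>weight K0 = 1\<close> card_1_singletonE unfolding weight_def by blast
  then have w0W: "w0 \<in> W" "w0 \<in> K0" "w0 \<notin> N" unfolding in_N_iff by auto
  have K0_at: "K0 \<in> quads_at w0" using K0 w0W unfolding quads_at_def by blast
  then have "card (quads_at w0 - {K0}) = 2" using W_degrees(2)[OF w0W(1)] finite_quads_at by simp
  then obtain K' K'' where KK: "quads_at w0 - {K0} = {K', K''}" "K' \<noteq> K''"
    by (meson card_2_iff)
  have light: "card (K \<inter> N) \<le> 2" if "K \<in> {K', K''}" for K
    using quad_at_apex_light[OF K0(1) K0N w0W(2,1)] that KK unfolding quads_at_def by blast
  have quads_w0: "quads_at w0 = {K0, K', K''}" using KK K0_at by blast
  have "K0 \<noteq> K'" "K0 \<noteq> K''" using KK by auto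
  then have "(\<Sum>K\<in>quads_at w0. card (K \<inter> N)) = 3 + card (K' \<inter> N) + card (K'' \<inter> N)"
    using quads_w0 KK(2) K0N card_R by simp
  moreover have "card (K' \<inter> N) \<le> 2" "card (K'' \<inter> N) \<le> 2" using light by auto
  ultimately have "card (K' \<inter> N) = 2" "card (K'' \<inter> N) = 2"
    using W_N_incidences[OF w0W(1)] by linarith+
  moreover have "K' \<in> quads" "K'' \<in> quads" using KK unfolding quads_at_def by auto
  ultimately have "weight K' = 2" "weight K'' = 2"
    using weight_add_card_Int_N[of K'] weight_add_card_Int_N[of K''] by auto
  with that w0W K0N quads_w0 KK(2) show ?thesis by blast
qed

lemma heavy_partners_outside:
  assumes K: "K' \<in> quads" "weight K' = 2" "K'' \<in> quads" "weight K'' = 2" "K' \<noteq> K''"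
  obtains a a' b b' where "a \<in> Z1" "a' \<in> Z1" "a \<noteq> a'"
    "b \<in> heavy_quad a" "b \<in> Z2" "b' \<in> heavy_quad a'" "b' \<in> Z2"
    "\<And>u. u \<in> {a, a', b, b'} \<Longrightarrow> u \<notin> K' \<and> u \<notin> K''"
proof -
  obtain a1 b1 where ab1: "K' \<inter> N = {a1, b1}" "a1 \<in> Z1" "b1 \<in> Z2"
    using heavy_quad_meets_Z1_and_Z2 K by blast
  obtain a2 b2 where ab2: "K'' \<inter> N = {a2, b2}" "a2 \<in> Z1" "b2 \<in> Z2"
    using heavy_quad_meets_Z1_and_Z2 K by blast
  have "heavy_quad a1 = K'" "heavy_quad a2 = K''"
    using heavy_quad_eq[of a1 K'] heavy_quad_eq[of a2 K''] ab1 ab2 K by auto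
  then have "a1 \<noteq> a2" using K(5) by auto
  then have "card (Z1 - {a1, a2}) = 2"
    using card_Diff_subset[of "{a1, a2}" Z1] ab1(2) ab2(2) Z_quads(1) card_quad by simp
  then obtain a a' where aa': "Z1 - {a1, a2} = {a, a'}" "a \<noteq> a'"
    by (meson card_2_iff)
  have outside: "v \<notin> K' \<and> v \<notin> K''" if v: "v \<in> Z1 - {a1, a2}" for v
  proof -
    have "v \<in> N" "v \<notin> Z2" using v Z_subset_N Z1_Int_Z2 by auto
    then have "v \<notin> {a1, b1}" "v \<notin> {a2, b2}" using v ab1(3) ab2(3) by auto
    then show ?thesis using ab1(1) ab2(1) \<open>v \<in> N\<close> by blast
  qed
  have a: "a \<in> Z1 - {a1, a2}" "a' \<in> Z1 - {a1, a2}" using aa' by auto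
  obtain b where b: "b \<in> Z2" "b \<in> heavy_quad a" using heavy_quad_partner_exists a by blast
  obtain b' where b': "b' \<in> Z2" "b' \<in> heavy_quad a'" using heavy_quad_partner_exists a by blast
  have partner_outside: "c \<notin> K' \<and> c \<notin> K''"
    if "v \<in> Z1 - {a1, a2}" "c \<in> Z2" "c \<in> heavy_quad v" for v c
    using heavy_quad_avoids[OF K(1,2), of v c] heavy_quad_avoids[OF K(3,4), of v c]
      outside[OF that(1)] that by blast
  have "u \<notin> K' \<and> u \<notin> K''" if "u \<in> {a, a', b, b'}" for u
    using that outside[OF a(1)] outside[OF a(2)]
      partner_outside[OF a(1) b] partner_outside[OF a(2) b'] by blast
  with that[of a a' b b'] aa' a b b' show ?thesis by blast
qed

lemma no_quad_contains_R:
  assumes K0: "K0 \<in> quads" "R \<subseteq> K0"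
  shows False
proof -
  obtain w0 K' K'' where apex: "w0 \<in> W" "w0 \<in> K0" "K0 \<inter> N = R" "quads_at w0 = {K0, K', K''}"
    "K' \<noteq> K''" "weight K' = 2" "weight K'' = 2"
    using R_quad_apex[OF K0] by blast
  have K': "K' \<in> quads" "w0 \<in> K'" and K'': "K'' \<in> quads" "w0 \<in> K''"
    using apex(4) unfolding quads_at_def by auto
  obtain a a' b b' where ab: "a \<in> Z1" "a' \<in> Z1" "a \<noteq> a'"
    "b \<in> heavy_quad a" "b \<in> Z2" "b' \<in> heavy_quad a'" "b' \<in> Z2"
    and outside: "\<And>u. u \<in> {a, a', b, b'} \<Longrightarrow> u \<notin> K' \<and> u \<notin> K''"
    using heavy_partners_outside[OF K'(1) apex(6) K''(1) apex(7) apex(5)] by blast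
  have reach: "\<exists>L\<in>quads. w \<in> L \<and> u \<in> L \<and> L \<noteq> K"
    if u: "u \<in> {a, a', b, b'}" and K: "K \<in> {K', K''}" "w \<in> K" "w \<in> W" "w \<noteq> w0" for u K w
  proof -
    have "u \<in> Z1 \<union> Z2" using u ab by blast
    then have "u \<in> N" "u \<notin> K0" using Z_subset_N apex(3) R_Int_Z by blast+
    moreover have "w0 \<in> V" "w0 \<notin> N" using apex(1) W_subset in_N_iff by blast+
    ultimately have "\<exists>B\<in>triangles. w0 \<in> B \<and> u \<in> B"
      using triangle_through_if_no_quad[of w0 u] apex(4) outside[OF u] N_subset by blast
    then obtain B where "B \<in> triangles" "w0 \<in> B" "u \<in> B" by blast
    moreover have "u \<notin> K" using outside[OF u] K(1) by blast
    ultimately show ?thesis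
      using quad_through_W_and_N[OF \<open>u \<in> N\<close>, of B w0 K w] K K' K'' W_subset quads_subset
      by blast
  qed
  obtain w1 where w1: "w1 \<in> K' \<inter> W" "w1 \<noteq> w0"
    using card_ge_2_obtain_other[of "K' \<inter> W" w0] apex(6) finite_W unfolding weight_def by auto
  obtain w2 where w2: "w2 \<in> K'' \<inter> W" "w2 \<noteq> w0"
    using card_ge_2_obtain_other[of "K'' \<inter> W" w0] apex(7) finite_W unfolding weight_def by auto
  have "w1 \<noteq> w2"
    using block_unique[of K' K'' w0 w1] K' K'' w1 w2 apex(5) quads_subset by blast
  obtain L1 where L1: "L1 \<in> quads" "w1 \<in> L1" "a \<in> L1" "b' \<in> L1"
    using crossed_quad_exists[of w1 K' a a' b b'] reach[of _ K' w1] w1 K' apex(6) ab by blast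
  obtain L2 where L2: "L2 \<in> quads" "w2 \<in> L2" "a \<in> L2" "b' \<in> L2"
    using crossed_quad_exists[of w2 K'' a a' b b'] reach[of _ K'' w2] w2 K'' apex(7) ab by blast
  have "a \<noteq> b'" using ab Z1_Int_Z2 by blast
  then have "L1 = L2" using block_unique[of L1 L2 a b'] L1 L2 quads_subset by blast
  then have "{w1, w2} \<subseteq> L1 \<inter> W" using L1 L2 w1 w2 by blast
  then have "2 \<le> weight L1"
    using card_mono[of "L1 \<inter> W" "{w1, w2}"] \<open>w1 \<noteq> w2\<close> finite_W unfolding weight_def by auto
  then have "L1 = heavy_quad a"
    using heavy_quad_eq[of a L1] weight_le_2[OF L1(1)] L1 ab(1) by auto
  with L1(4) heavy_partners_distinct[OF ab(1-3), of b' b'] ab show False by auto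
qed

end

theorem mainTheorem17:
  fixes V :: "'a set" and D :: "'a set set"
  assumes "finite V" and "card V = 18"
    and "K34_decomposition V D"
    and "alpha D = 13"
  shows "(tcount V D 0, tcount V D 1, tcount V D 2, tcount V D 3) \<noteq> (0, 0, 11, 2)"
proof
  assume "(tcount V D 0, tcount V D 1, tcount V D 2, tcount V D 3) = (0, 0, 11, 2)"
  then interpret K18_counterexample V D
    using assms by unfold_locales auto
  consider "quad_count 3 = 0" "quad_count 0 = 2" | "quad_count 2 = 1" "quad_count 0 = 1"
    using quad_count_cases by auto
  then show False
  proof cases
    case 1
    then obtain Z1 Z2 where "{K\<in>quads. weight K = 0} = {Z1, Z2}" "Z1 \<noteq> Z2"
      unfolding quad_count_def by (meson card_2_iff)
    then interpret K18_two_N_quads V D Z1 Z2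
      using 1 by unfold_locales
    show False using R_in_quad no_quad_contains_R by blast
  next
    case 2
    then show False by (rule single_heavy_quad_impossible)
  qed
qed

end
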